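(* Let $G=\mathrm{Circ}(a_0,\ldots,a_{n-1})$ be a Hermitian circulant with universal perfect state transfer. If $n$ is a prime, the square of a prime, or a power of two, then $a_j\neq 0$ for all $j=1,\ldots,n-1$ (i.e. $G$ is dense).
   Context: $\mathrm{Circ}(a_0,\ldots,a_{n-1})$ denotes the $n\times n$ matrix $C$ with $C_{j,k}=a_{k-j}$ (indices in $\mathbb{Z}/n\mathbb{Z}$), the adjacency matrix of a weighted graph. A graph with Hermitian adjacency matrix $A$ has universal perfect state transfer if for every pair of vertices $v,w$ there is $t>0$ with $|\langle w|e^{-\mathtt{i} At}|v\rangle|=1$. A circulant is dense if $a_j\ne 0$ for $j=1,\ldots,n-1$. *)

theory Defs
  imports "Jordan_Normal_Form.Matrix" "HOL-Computational_Algebra.Primes" Complex_Main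
begin

definition circ :: "nat \<Rightarrow> (nat \<Rightarrow> complex) \<Rightarrow> complex mat" where
  "circ n a = mat n n (\<lambda>(j, k). a ((k + n - j) mod n))"

definition hermitian_mat :: "complex mat \<Rightarrow> bool" where
  "hermitian_mat A \<longleftrightarrow> dim_row A = dim_col A \<and>
     (\<forall>j < dim_row A. \<forall>k < dim_row A. A $$ (k, j) = cnj (A $$ (j, k)))"

definition transfer_amp :: "complex mat \<Rightarrow> real \<Rightarrow> nat \<Rightarrow> nat \<Rightarrow> complex" where
  "transfer_amp A t w v = (\<Sum>m. ((- \<i> * complex_of_real t) ^ m / of_nat (fact m)) * (A ^\<^sub>m m) $$ (w, v))"

definition universal_pst :: "complex mat \<Rightarrow> bool" where
  "universal_pst A \<longleftrightarrow> (\<forall>v < dim_row A. \<forall>w < dim_row A. v \<noteq> w \<longrightarrow>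
     (\<exists>t > 0. cmod (transfer_amp A t w v) = 1))"

definition dense_circ :: "nat \<Rightarrow> (nat \<Rightarrow> complex) \<Rightarrow> bool" where
  "dense_circ n a \<longleftrightarrow> (\<forall>j \<in> {1..n-1}. a j \<noteq> 0)"

end

(*
  A circulant is diagonalised by the characters of Z/nZ: with w = exp(2 pi i / n) its eigenvalues
  are l_k = sum_j a_j w^(jk), real when the matrix is Hermitian, and the amplitude
  <1| exp(-iAt) |0> is the mean (1/n) sum_k exp(-i t l_k) w^k of n unimodular numbers.  Perfect
  transfer from vertex 0 to vertex 1 (the only pair used) forces all these numbers to coincide,
  i.e. l_k = l_0 + c (k - n m_k) with c <> 0 and integers m_k.

  If a_j = 0 for some 0 < j < n, then sum_k l_k z^k = 0 for the n-th root of unity z = w^(-j) <> 1.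
  As sum_k z^k = 0 and (z - 1) sum_k k z^k = n, this yields (z - 1) sum_k m_k z^k = 1, so z - 1
  would be a unit of Z[z].  For n = p^E this is impossible: (x - 1)^n = x^n - 1 (mod p) makes
  (z - 1)^n divisible by p in Z[z], so 1/p would be an algebraic integer.
*)

theory Submission
  imports Defs "Jordan_Normal_Form.Char_Poly"
begin

section \<open>Units in rings generated by roots of unity\<close>

lemma algebraic_int_poly_root_of_unity:
  fixes z :: complex and q :: "int poly"
  assumes z: "z ^ N = 1" and N: "N > 0"
  shows "algebraic_int (poly (map_poly of_int q) z)"
proof -
  \<comment> \<open>\<open>C\<close> represents multiplication by \<open>q(z)\<close> on the powers \<open>z ^ 0, \<dots>, z ^ (N - 1)\<close>,
    which form an eigenvector; so \<open>q(z)\<close> is a root of the monic polynomial \<open>char_poly C\<close>.\<close>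
  define r where "r = poly (map_poly of_int q) z"
  define C :: "int mat" where
    "C = mat N N (\<lambda>(i, j). \<Sum>l\<le>degree q. if (i + l) mod N = j then coeff q l else 0)"
  define v :: "complex vec" where "v = vec N (\<lambda>j. z ^ j)"
  have C: "C \<in> carrier_mat N N" unfolding C_def by simp
  have z_mod: "z ^ (k mod N) = z ^ k" for k
    by (metis z mult_div_mod_eq power_add power_mult power_one mult_1)
  have r: "r = (\<Sum>l\<le>degree q. of_int (coeff q l) * z ^ l)"
    unfolding r_def by (simp add: poly_altdef coeff_map_poly degree_map_poly)
  have "map_mat of_int C *\<^sub>v v = r \<cdot>\<^sub>v v"
  proof (rule eq_vecI)
    fix i assume "i < dim_vec (r \<cdot>\<^sub>v v)"
    hence i: "i < N" by (simp add: v_def)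
    have "(map_mat of_int C *\<^sub>v v) $ i =
          (\<Sum>j<N. \<Sum>l\<le>degree q. if (i + l) mod N = j then of_int (coeff q l) * z ^ j else 0)"
      using i C by (auto simp: mult_mat_vec_def scalar_prod_def v_def C_def lessThan_atLeast0
          sum_distrib_right of_int_sum intro!: sum.cong)
    also have "\<dots> = (\<Sum>l\<le>degree q. of_int (coeff q l) * z ^ ((i + l) mod N))"
      using N by (subst sum.swap) (auto simp: sum.delta' intro!: sum.cong)
    also have "\<dots> = z ^ i * r"
      by (simp add: r z_mod power_add sum_distrib_left algebra_simps)
    finally show "(map_mat of_int C *\<^sub>v v) $ i = (r \<cdot>\<^sub>v v) $ i"
      using i by (simp add: v_def)
  qed (simp add: v_def C_def)
  moreover have "v \<noteq> 0\<^sub>v N"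
    using N by (auto simp: v_def dest!: arg_cong[of _ _ "\<lambda>u. u $ 0"])
  ultimately have "eigenvalue (map_mat of_int C) r"
    unfolding eigenvalue_def eigenvector_def using C by (intro exI[of _ v]) (auto simp: v_def)
  hence "poly (char_poly (map_mat of_int C)) r = 0"
    using C by (simp add: eigenvalue_root_char_poly)
  hence "poly (map_poly of_int (char_poly C)) r = 0"
    by (simp add: of_int_hom.char_poly_hom[OF C])
  moreover have "lead_coeff (char_poly C) = 1"
    using degree_monic_char_poly[OF C] by simp
  ultimately show ?thesis
    unfolding r_def[symmetric] algebraic_int_altdef_ipoly by blast
qed

lemma prime_dvd_prime_power_choose:
  fixes p :: nat
  assumes p: "prime p" and k: "0 < k" "k < p ^ E"
  shows "p dvd (p ^ E choose k)"
proof (rule ccontr)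
  assume "\<not> p dvd (p ^ E choose k)"
  hence "coprime (p ^ E) (p ^ E choose k)"
    using p by (simp add: prime_imp_coprime coprime_power_left_iff)
  moreover have "p ^ E dvd k * (p ^ E choose k)"
    using times_binomial_minus1_eq[OF k(1), of "p ^ E"] by simp
  ultimately have "p ^ E dvd k"
    using coprime_dvd_mult_left_iff by blast
  thus False using k by (simp add: nat_dvd_not_less)
qed

lemma prime_dvd_neg_one_power_plus_one:
  assumes p: "prime p" and E: "E > 0"
  shows "int p dvd (-1) ^ (p ^ E) + 1"
proof (cases "p = 2")
  case False
  hence "p > 2" using prime_ge_2_nat[OF p] by linarith
  hence "odd (p ^ E)" using p prime_odd_nat by simp
  thus ?thesis by simp
qed (use E in simp)

lemma prime_dvd_linear_power_frobenius:
  assumes p: "prime p" and E: "E > 0"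
  shows "[:int p:] dvd [:-1, 1:] ^ (p ^ E) - monom 1 (p ^ E) + 1"
proof (unfold const_poly_dvd_iff, intro allI)
  fix k
  define N where "N = p ^ E"
  have N: "N > 0" unfolding N_def using p by (simp add: prime_gt_0_nat)
  consider "k = 0" | "0 < k" "k < N" | "k = N" | "k > N" by linarith
  thus "int p dvd coeff ([:-1, 1:] ^ (p ^ E) - monom 1 (p ^ E) + 1) k"
  proof cases
    case 1
    thus ?thesis using N prime_dvd_neg_one_power_plus_one[OF p E]
      by (simp add: coeff_linear_poly_power N_def)
  next
    case 2
    have "int p dvd int (N choose k)"
      using prime_dvd_prime_power_choose[OF p 2[unfolded N_def]] by (simp add: N_def)
    thus ?thesis using 2 by (simp add: coeff_linear_poly_power N_def)
  next
    case 3
    thus ?thesis using N by (simp add: coeff_linear_poly_power N_def)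
  next
    case 4
    thus ?thesis by (simp add: coeff_eq_0 degree_linear_power N_def)
  qed
qed

lemma root_of_unity_minus_one_not_unit:
  fixes z :: complex and Q :: "int poly"
  assumes p: "prime p" and E: "E > 0" and z: "z ^ (p ^ E) = 1"
  shows "(z - 1) * poly (map_poly of_int Q) z \<noteq> 1"
proof
  assume unit: "(z - 1) * poly (map_poly of_int Q) z = 1"
  define N where "N = p ^ E"
  have N: "N > 0" unfolding N_def using p by (simp add: prime_gt_0_nat)
  obtain D :: "int poly" where D: "[:-1, 1:] ^ N - monom 1 N + 1 = [:int p:] * D"
    using prime_dvd_linear_power_frobenius[OF p E] unfolding N_def by (elim dvdE)
  have "(z - 1) ^ N = of_nat p * poly (map_poly of_int D) z"
    using arg_cong[OF D, of "\<lambda>P. poly (map_poly of_int P) z"] z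
    by (simp add: N_def hom_distribs poly_monom)
  hence "1 = of_nat p * poly (map_poly of_int (D * Q ^ N)) z"
    using arg_cong[OF unit, of "\<lambda>w. w ^ N"]
    by (simp add: power_mult_distrib hom_distribs mult.assoc)
  hence inv_p: "1 / of_nat p = poly (map_poly of_int (D * Q ^ N)) z"
    using p by (simp add: field_simps prime_gt_0_nat)
  have "algebraic_int (1 / (of_nat p :: complex))"
    unfolding inv_p using algebraic_int_poly_root_of_unity z N by (simp add: N_def)
  hence "1 / (of_nat p :: complex) \<in> \<int>"
    by (intro rational_algebraic_int_is_int) simp_all
  then obtain m where "1 / (of_nat p :: complex) = of_int m" by (elim Ints_cases)
  hence "of_int (m * int p) = (1 :: complex)"
    using p by (simp add: field_simps prime_gt_0_nat)
  hence "int p dvd 1" by (metis dvd_triv_right of_int_eq_1_iff)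
  thus False using p by simp
qed

section \<open>Roots of unity\<close>

lemma cis_eq_1_imp_int_multiple:
  assumes "cis \<theta> = 1"
  obtains m :: int where "\<theta> = 2 * pi * of_int m"
proof -
  have "cos \<theta> = 1" using assms by (metis cis.sel(1) one_complex.sel(1))
  then obtain m :: int where "\<theta> = of_int m * 2 * pi" using cos_one_2pi_int by blast
  thus ?thesis using that by (simp add: algebra_simps)
qed

lemma cis_eq_cis_imp_int_multiple:
  assumes "cis \<alpha> = cis \<beta>"
  obtains m :: int where "\<alpha> = \<beta> + 2 * pi * of_int m"
proof -
  have "cis (\<alpha> - \<beta>) = 1" using assms by (simp add: cis_divide[symmetric])
  then obtain m :: int where "\<alpha> - \<beta> = 2 * pi * of_int m" by (elim cis_eq_1_imp_int_multiple)
  thus ?thesis using that[of m] by simp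
qed

definition unity_root :: "nat \<Rightarrow> int \<Rightarrow> complex" where
  "unity_root n x = cis (2 * pi * of_int x / of_nat n)"

lemma unity_root_add: "unity_root n (x + y) = unity_root n x * unity_root n y"
  unfolding unity_root_def by (simp add: cis_mult add_divide_distrib algebra_simps)

lemma cnj_unity_root: "cnj (unity_root n x) = unity_root n (- x)"
  unfolding unity_root_def by (simp add: cis_cnj)

lemma unity_root_power: "unity_root n x ^ k = unity_root n (x * int k)"
  unfolding unity_root_def by (simp add: DeMoivre algebra_simps)

lemma unity_root_eq_1_iff:
  assumes n: "n > 0"
  shows "unity_root n x = 1 \<longleftrightarrow> int n dvd x"
proof
  assume "unity_root n x = 1"
  then obtain m :: int where "2 * pi * of_int x / of_nat n = 2 * pi * of_int m"
    unfolding unity_root_def by (elim cis_eq_1_imp_int_multiple)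
  hence "of_int x = (of_int (m * int n) :: real)" using n by (simp add: field_simps)
  thus "int n dvd x" by (simp only: of_int_eq_iff) simp
next
  assume "int n dvd x"
  then obtain m where "x = int n * m" by blast
  hence "2 * pi * of_int x / of_nat n = 2 * pi * of_int m" using n by simp
  thus "unity_root n x = 1" unfolding unity_root_def by simp
qed

lemma sum_unity_root:
  assumes n: "n > 0"
  shows "(\<Sum>k<n. unity_root n (x * int k)) = (if int n dvd x then of_nat n else 0)"
proof (cases "int n dvd x")
  case True
  hence "unity_root n x = 1" using unity_root_eq_1_iff[OF n] by simp
  thus ?thesis using True by (simp flip: unity_root_power)
next
  case False
  hence "unity_root n x \<noteq> 1" using unity_root_eq_1_iff[OF n] by simp
  moreover have "unity_root n x ^ n = 1"
    using unity_root_eq_1_iff[OF n] by (simp add: unity_root_power)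
  ultimately show ?thesis
    using False by (simp add: sum_gp_strict flip: unity_root_power)
qed

lemma unity_root_convolution_factor:
  "unity_root n ((r - s) * k) * unity_root n ((s - c) * l) =
    unity_root n (r * k - c * l) * unity_root n ((l - k) * s)"
  unfolding unity_root_add[symmetric]
  by (rule arg_cong[where f = "unity_root n"]) (simp add: algebra_simps)

lemma sum_rotate3:
  "(\<Sum>s\<in>A. \<Sum>k\<in>B. \<Sum>l\<in>C. f s k l) = (\<Sum>k\<in>B. \<Sum>l\<in>C. \<Sum>s\<in>A. f s k l)"
  by (subst sum.swap) (rule sum.cong[OF refl sum.swap])

lemma int_dvd_diff_less_iff:
  assumes "k < n" "l < n"
  shows "int n dvd int l - int k \<longleftrightarrow> l = k"
proof
  assume "int n dvd int l - int k"
  hence "int l mod int n = int k mod int n" by (simp add: mod_eq_dvd_iff)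
  thus "l = k" using assms by simp
qed simp

lemma sum_unity_root_orthogonal:
  assumes n: "n > 0" and "k < n" "l < n"
  shows "(\<Sum>s<n. unity_root n ((int l - int k) * int s)) = (if l = k then of_nat n else 0)"
  using assms by (simp add: sum_unity_root int_dvd_diff_less_iff)

section \<open>The spectral form of a circulant\<close>

text \<open>The matrix with eigenvalue \<open>x k\<close> on the Fourier vector \<open>(w ^ (j * k))\<^sub>j\<close>, where
  \<open>w = unity_root n 1\<close>; only \<open>x 0, \<dots>, x (n - 1)\<close> matter.\<close>

definition circ_spectral :: "nat \<Rightarrow> (nat \<Rightarrow> complex) \<Rightarrow> complex mat" where
  "circ_spectral n x =
     mat n n (\<lambda>(r, c). (\<Sum>k<n. x k * unity_root n ((int r - int c) * int k)) / of_nat n)"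

definition circ_eigenvalue :: "nat \<Rightarrow> (nat \<Rightarrow> complex) \<Rightarrow> nat \<Rightarrow> complex" where
  "circ_eigenvalue n a k = (\<Sum>j<n. a j * unity_root n (int j * int k))"

lemma dim_circ_spectral [simp]:
  "dim_row (circ_spectral n x) = n" "dim_col (circ_spectral n x) = n"
  unfolding circ_spectral_def by simp_all

lemma circ_spectral_index:
  "r < n \<Longrightarrow> c < n \<Longrightarrow>
    circ_spectral n x $$ (r, c) = (\<Sum>k<n. x k * unity_root n ((int r - int c) * int k)) / of_nat n"
  unfolding circ_spectral_def by simp

lemma dft_eq_0_imp_eq_0:
  assumes n: "n > 0" and dft: "\<And>s. s < n \<Longrightarrow> (\<Sum>l<n. x l * unity_root n (int s * int l)) = 0"
    and k: "k < n"
  shows "x k = 0"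
proof -
  have "0 = (\<Sum>s<n. unity_root n (- int s * int k) * (\<Sum>l<n. x l * unity_root n (int s * int l)))"
    using dft by simp
  also have "\<dots> = (\<Sum>s<n. \<Sum>l<n. x l * unity_root n ((int l - int k) * int s))"
    by (simp add: sum_distrib_left mult.left_commute algebra_simps flip: unity_root_add)
  also have "\<dots> = (\<Sum>l<n. x l * (\<Sum>s<n. unity_root n ((int l - int k) * int s)))"
    by (subst sum.swap) (simp add: sum_distrib_left)
  also have "\<dots> = x k * of_nat n"
    using k by (simp add: sum_unity_root_orthogonal[OF n k] if_distrib cong: if_cong)
  finally show ?thesis using n by simp
qed

lemma int_dvd_iff_eq_circ_index:
  assumes "i < n" "r < n"
  shows "int n dvd int i + int r - int c \<longleftrightarrow> i = (c + n - r) mod n"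
proof -
  have "int i + int r - int c = (int i - int (c + n - r)) + int n"
    using assms by simp
  hence "int n dvd int i + int r - int c \<longleftrightarrow> int n dvd int i - int (c + n - r)"
    by (simp only: dvd_add_left_iff dvd_refl)
  also have "\<dots> \<longleftrightarrow> int i mod int n = int (c + n - r) mod int n"
    by (rule mod_eq_dvd_iff[symmetric])
  also have "\<dots> \<longleftrightarrow> i = (c + n - r) mod n"
    using assms by (metis mod_less of_nat_eq_iff of_nat_mod)
  finally show ?thesis .
qed

lemma circ_eq_circ_spectral:
  assumes n: "n > 0"
  shows "circ n a = circ_spectral n (circ_eigenvalue n a)"
proof (rule eq_matI)
  fix r c assume "r < dim_row (circ_spectral n (circ_eigenvalue n a))"
    and "c < dim_col (circ_spectral n (circ_eigenvalue n a))"
  hence r: "r < n" and c: "c < n" by simp_all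
  have "(\<Sum>l<n. circ_eigenvalue n a l * unity_root n ((int r - int c) * int l)) =
        (\<Sum>l<n. \<Sum>i<n. a i * unity_root n ((int i + int r - int c) * int l))"
    unfolding circ_eigenvalue_def sum_distrib_right
    by (intro sum.cong refl) (simp add: mult.assoc algebra_simps flip: unity_root_add)
  also have "\<dots> = (\<Sum>i<n. a i * (\<Sum>l<n. unity_root n ((int i + int r - int c) * int l)))"
    by (subst sum.swap) (simp add: sum_distrib_left)
  also have "\<dots> = (\<Sum>i<n. a i * (if i = (c + n - r) mod n then of_nat n else 0))"
    using n r by (intro sum.cong refl) (simp add: sum_unity_root int_dvd_iff_eq_circ_index)
  also have "\<dots> = a ((c + n - r) mod n) * of_nat n"
    using n by (simp add: if_distrib sum.delta' cong: if_cong)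
  finally have "circ_spectral n (circ_eigenvalue n a) $$ (r, c) = a ((c + n - r) mod n)"
    using n r c by (simp add: circ_spectral_index)
  thus "circ n a $$ (r, c) = circ_spectral n (circ_eigenvalue n a) $$ (r, c)"
    using r c by (simp add: circ_def)
qed (simp_all add: circ_def)

lemma one_mat_eq_circ_spectral:
  assumes n: "n > 0"
  shows "1\<^sub>m n = circ_spectral n (\<lambda>_. 1)"
  by (rule eq_matI) (simp_all add: circ_spectral_index sum_unity_root_orthogonal[OF n])

lemma circ_spectral_mult:
  assumes n: "n > 0"
  shows "circ_spectral n x * circ_spectral n y = circ_spectral n (\<lambda>k. x k * y k)"
proof (rule eq_matI)
  fix r c assume "r < dim_row (circ_spectral n (\<lambda>k. x k * y k))"
    and "c < dim_col (circ_spectral n (\<lambda>k. x k * y k))"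
  hence r: "r < n" and c: "c < n" by simp_all
  define f where "f k l = x k * y l * unity_root n (int r * int k - int c * int l)" for k l
  have "(circ_spectral n x * circ_spectral n y) $$ (r, c) =
        (\<Sum>s<n. circ_spectral n x $$ (r, s) * circ_spectral n y $$ (s, c))"
    using r c by (simp add: scalar_prod_def lessThan_atLeast0)
  also have "\<dots> = (\<Sum>s<n. (\<Sum>k<n. x k * unity_root n ((int r - int s) * int k)) *
                        (\<Sum>l<n. y l * unity_root n ((int s - int c) * int l))) / of_nat n ^ 2"
    unfolding sum_divide_distrib
    by (intro sum.cong refl) (simp add: circ_spectral_index r c power2_eq_square)
  also have "\<dots> = (\<Sum>s<n. \<Sum>k<n. \<Sum>l<n. f k l * unity_root n ((int l - int k) * int s)) / of_nat n ^ 2"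
  proof -
    have "x k * unity_root n ((int r - int s) * int k) * (y l * unity_root n ((int s - int c) * int l)) =
          f k l * unity_root n ((int l - int k) * int s)" for s k l
    proof -
      have "x k * unity_root n ((int r - int s) * int k) * (y l * unity_root n ((int s - int c) * int l)) =
          x k * y l * (unity_root n ((int r - int s) * int k) * unity_root n ((int s - int c) * int l))"
        by (simp only: mult_ac)
      thus ?thesis by (simp only: unity_root_convolution_factor f_def mult.assoc)
    qed
    thus ?thesis by (simp only: sum_product)
  qed
  also have "\<dots> = (\<Sum>k<n. \<Sum>l<n. f k l * (\<Sum>s<n. unity_root n ((int l - int k) * int s))) / of_nat n ^ 2"
    by (subst sum_rotate3) (simp only: sum_distrib_left)
  also have "\<dots> = (\<Sum>k<n. f k k) / of_nat n"
    using n by (simp add: sum_unity_root_orthogonal[OF n] if_distrib power2_eq_square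
        sum_divide_distrib cong: if_cong)
  also have "\<dots> = circ_spectral n (\<lambda>k. x k * y k) $$ (r, c)"
    using r c by (simp add: circ_spectral_index f_def algebra_simps)
  finally show "(circ_spectral n x * circ_spectral n y) $$ (r, c) = \<dots>" .
qed simp_all

lemma circ_spectral_power:
  assumes n: "n > 0"
  shows "circ_spectral n x ^\<^sub>m m = circ_spectral n (\<lambda>k. x k ^ m)"
proof (induction m)
  case 0
  show ?case by (simp add: one_mat_eq_circ_spectral[OF n])
next
  case (Suc m)
  have "circ_spectral n x ^\<^sub>m Suc m = circ_spectral n (\<lambda>k. x k ^ m) * circ_spectral n x"
    by (simp only: pow_mat.simps Suc.IH)
  also have "\<dots> = circ_spectral n (\<lambda>k. x k ^ Suc m)"
    by (simp only: circ_spectral_mult[OF n] power_Suc2)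
  finally show ?case .
qed

lemma hermitian_circ_spectral_imp_real:
  assumes n: "n > 0" and herm: "hermitian_mat (circ_spectral n x)" and k: "k < n"
  shows "x k \<in> \<real>"
proof -
  have "x k - cnj (x k) = 0"
  proof (rule dft_eq_0_imp_eq_0[where x = "\<lambda>l. x l - cnj (x l)", OF n _ k])
    fix s assume s: "s < n"
    have "circ_spectral n x $$ (s, 0) = cnj (circ_spectral n x $$ (0, s))"
      using herm s n unfolding hermitian_mat_def dim_circ_spectral by blast
    hence "(\<Sum>l<n. x l * unity_root n (int s * int l)) = (\<Sum>l<n. cnj (x l) * unity_root n (int s * int l))"
      using s n by (simp add: circ_spectral_index cnj_unity_root)
    thus "(\<Sum>l<n. (x l - cnj (x l)) * unity_root n (int s * int l)) = 0"
      by (simp add: left_diff_distrib sum_subtractf)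
  qed
  thus ?thesis by (simp add: Reals_cnj_iff)
qed

lemma transfer_amp_circ_spectral:
  assumes n: "n > 0" and w: "w < n" and v: "v < n"
  shows "transfer_amp (circ_spectral n x) t w v =
    (\<Sum>k<n. exp (- \<i> * of_real t * x k) * unity_root n ((int w - int v) * int k)) / of_nat n"
proof -
  define z where "z = - \<i> * complex_of_real t"
  have "(\<lambda>m. (z ^ m / of_nat (fact m)) * (circ_spectral n x ^\<^sub>m m) $$ (w, v)) =
        (\<lambda>m. \<Sum>k<n. unity_root n ((int w - int v) * int k) / of_nat n * ((x k * z) ^ m /\<^sub>R fact m))"
    by (simp add: circ_spectral_power[OF n] circ_spectral_index w v sum_distrib_left
        sum_divide_distrib scaleR_conv_of_real power_mult_distrib divide_inverse mult_ac)
  moreover have "(\<lambda>m. \<Sum>k<n. unity_root n ((int w - int v) * int k) / of_nat n * ((x k * z) ^ m /\<^sub>R fact m))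
     sums (\<Sum>k<n. unity_root n ((int w - int v) * int k) / of_nat n * exp (x k * z))"
    by (intro sums_sum sums_mult exp_converges)
  ultimately have "transfer_amp (circ_spectral n x) t w v =
      (\<Sum>k<n. unity_root n ((int w - int v) * int k) / of_nat n * exp (x k * z))"
    unfolding transfer_amp_def z_def[symmetric] by (simp add: sums_iff)
  also have "\<dots> = (\<Sum>k<n. exp (- \<i> * of_real t * x k) * unity_root n ((int w - int v) * int k) / of_nat n)"
    unfolding z_def by (intro sum.cong refl) (simp add: ac_simps)
  finally show ?thesis
    by (simp only: sum_divide_distrib)
qed

section \<open>Perfect state transfer on circulants\<close>

lemma norm_sum_eq_card_imp_eq_mean:
  fixes z :: "nat \<Rightarrow> complex"
  assumes unit: "\<And>k. k < n \<Longrightarrow> norm (z k) = 1"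
    and sum: "norm (\<Sum>k<n. z k) = of_nat n" and k: "k < n"
  shows "z k = (\<Sum>k<n. z k) / of_nat n"
proof -
  define S where "S = (\<Sum>k<n. z k)"
  define g where "g = S / of_nat n"
  have n: "n > 0" using k by simp
  have zz: "z k * cnj (z k) = 1" if "k < n" for k
    using complex_norm_square[of "z k"] unit[OF that] by simp
  have gg: "g * cnj g = 1"
    using complex_norm_square[of g] sum n by (simp add: g_def S_def norm_divide)
  have Sg: "S * cnj g = of_nat n" and gS: "g * cnj S = of_nat n"
    using gg n by (simp_all add: g_def field_simps)
  have "(\<Sum>k<n. complex_of_real ((norm (z k - g))\<^sup>2)) = (\<Sum>k<n. (z k - g) * cnj (z k - g))"
    by (intro sum.cong refl) (rule complex_norm_square)
  also have "\<dots> = (\<Sum>k<n. z k * cnj (z k)) - S * cnj g - g * cnj S + of_nat n * (g * cnj g)"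
    unfolding S_def
    by (simp add: algebra_simps sum_subtractf sum.distrib sum_distrib_left sum_distrib_right)
  also have "\<dots> = 0"
    using zz Sg gS gg by simp
  finally have "(\<Sum>k<n. (norm (z k - g))\<^sup>2) = 0"
    by (simp only: of_real_sum[symmetric] of_real_eq_0_iff)
  hence "norm (z k - g) = 0"
    using k by (subst (asm) sum_nonneg_eq_0_iff) auto
  thus ?thesis by (simp add: g_def S_def)
qed

lemma circ_spectral_pst_phases:
  assumes n: "n \<ge> 2" and real: "\<And>k. k < n \<Longrightarrow> x k \<in> \<real>"
    and pst: "cmod (transfer_amp (circ_spectral n x) t 1 0) = 1" and k: "k < n"
  shows "cis (2 * pi * of_nat k / of_nat n - t * Re (x k)) = cis (- t * Re (x 0))"
proof -
  define l where "l k = Re (x k)" for k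
  have x: "x k = of_real (l k)" if "k < n" for k
    using real[OF that] unfolding l_def by (simp add: complex_is_Real_iff)
  define z where "z k = cis (2 * pi * of_nat k / of_nat n - t * l k)" for k
  have "transfer_amp (circ_spectral n x) t 1 0 =
      (\<Sum>k<n. exp (- \<i> * of_real t * x k) * unity_root n ((int 1 - int 0) * int k)) / of_nat n"
    using n by (intro transfer_amp_circ_spectral) auto
  also have "\<dots> = (\<Sum>k<n. z k) / of_nat n"
    by (intro arg_cong[where f = "\<lambda>u. u / _"] sum.cong refl)
       (simp add: z_def x unity_root_def cis_conv_exp exp_add[symmetric] algebra_simps)
  finally have sum: "norm (\<Sum>k<n. z k) = of_nat n"
    using pst n by (simp add: norm_divide)
  have unit: "norm (z k) = 1" if "k < n" for k
    by (simp add: z_def)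
  have "0 < n" using n by simp
  from norm_sum_eq_card_imp_eq_mean[OF unit sum k] norm_sum_eq_card_imp_eq_mean[OF unit sum this]
  have "z k = z 0" by (rule trans[OF _ sym])
  thus ?thesis by (simp add: z_def l_def)
qed

lemma circ_spectral_pst_eigenvalues:
  assumes n: "n \<ge> 2" and real: "\<And>k. k < n \<Longrightarrow> x k \<in> \<real>" and t: "t > 0"
    and pst: "cmod (transfer_amp (circ_spectral n x) t 1 0) = 1"
  obtains c :: real and m :: "nat \<Rightarrow> int"
  where "c \<noteq> 0" "\<And>k. k < n \<Longrightarrow> x k = x 0 + of_real c * (of_nat k - of_nat n * of_int (m k))"
proof -
  have "\<forall>k\<in>{..<n}. \<exists>m::int. 2 * pi * of_nat k / of_nat n - t * Re (x k) = - t * Re (x 0) + 2 * pi * of_int m"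
    using circ_spectral_pst_phases[OF n real pst] by (blast elim: cis_eq_cis_imp_int_multiple)
  then obtain m :: "nat \<Rightarrow> int" where
    m: "\<And>k. k < n \<Longrightarrow> 2 * pi * of_nat k / of_nat n - t * Re (x k) = - t * Re (x 0) + 2 * pi * of_int (m k)"
    by (metis bchoice lessThan_iff)
  define c where "c = 2 * pi / (t * of_nat n)"
  show thesis
  proof
    show "c \<noteq> 0" using t n by (simp add: c_def)
  next
    fix k assume k: "k < n"
    have "Re (x k) = Re (x 0) + c * (of_nat k - of_nat n * of_int (m k))"
      using m[OF k] t n by (simp add: c_def field_simps)
    thus "x k = x 0 + of_real c * (of_nat k - of_nat n * of_int (m k))"
      using real[OF k] real[of 0] k by (simp add: complex_eq_iff complex_is_Real_iff)
  qed
qed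

lemma diff_one_mult_sum_index_power:
  fixes z :: "'a :: comm_ring_1"
  shows "(z - 1) * (\<Sum>k<N. of_nat k * z ^ k) = of_nat N * z ^ N - (\<Sum>k<N. z ^ Suc k)"
  by (induction N) (simp_all add: algebra_simps)

lemma linear_spectrum_vanishing_imp_unit:
  fixes z b c :: complex and m :: "nat \<Rightarrow> int"
  assumes n: "n > 0" and z: "z ^ n = 1" "z \<noteq> 1" and c: "c \<noteq> 0"
    and vanish: "(\<Sum>k<n. (b + c * (of_nat k - of_nat n * of_int (m k))) * z ^ k) = 0"
  shows "\<exists>Q :: int poly. (z - 1) * poly (map_poly of_int Q) z = 1"
proof
  have geom: "(\<Sum>k<n. z ^ k) = 0"
    using z by (simp add: sum_gp_strict)
  have "c * (\<Sum>k<n. (of_nat k - of_nat n * of_int (m k)) * z ^ k) = 0"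
    using vanish geom
    by (simp add: distrib_right sum.distrib sum_distrib_left mult.assoc flip: sum_distrib_left)
  hence "(\<Sum>k<n. of_nat k * z ^ k) = of_nat n * (\<Sum>k<n. of_int (m k) * z ^ k)"
    using c by (simp add: left_diff_distrib sum_subtractf sum_distrib_left mult.assoc)
  moreover have "(z - 1) * (\<Sum>k<n. of_nat k * z ^ k) = of_nat n"
    using diff_one_mult_sum_index_power[of z n] z geom by (simp flip: sum_distrib_left)
  ultimately have "(z - 1) * (\<Sum>k<n. of_int (m k) * z ^ k) = 1"
    using n by (simp add: mult.left_commute[of "of_nat n"])
  thus "(z - 1) * poly (map_poly of_int (\<Sum>k<n. monom (m k) k)) z = 1"
    by (simp add: hom_distribs poly_sum poly_monom)
qed

lemma circ_zero_entry_imp_unit: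
  assumes n: "n > 0" and j: "0 < j" "j < n" and a: "a j = 0" and c: "c \<noteq> 0"
    and spec: "\<And>k. k < n \<Longrightarrow>
      circ_eigenvalue n a k = circ_eigenvalue n a 0 + c * (of_nat k - of_nat n * of_int (m k))"
  defines "z \<equiv> unity_root n (- int j)"
  shows "\<exists>Q :: int poly. (z - 1) * poly (map_poly of_int Q) z = 1"
proof (rule linear_spectrum_vanishing_imp_unit[OF n _ _ c])
  show z: "z ^ n = 1" "z \<noteq> 1"
    using n j by (simp_all add: z_def unity_root_power unity_root_eq_1_iff nat_dvd_not_less)
  have "circ n a $$ (0, j) = 0" using n j a by (simp add: circ_def)
  hence "(\<Sum>k<n. circ_eigenvalue n a k * z ^ k) = 0"
    using n j by (simp add: z_def circ_eq_circ_spectral circ_spectral_index unity_root_power)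
  moreover have "(\<Sum>k<n. (circ_eigenvalue n a 0 + c * (of_nat k - of_nat n * of_int (m k))) * z ^ k) =
      (\<Sum>k<n. circ_eigenvalue n a k * z ^ k)"
    by (rule sum.cong[OF refl], rule arg_cong[where f = "\<lambda>u. u * _"], rule spec[symmetric]) simp
  ultimately show "(\<Sum>k<n. (circ_eigenvalue n a 0 + c * (of_nat k - of_nat n * of_int (m k))) * z ^ k) = 0"
    by simp
qed

lemma prime_power_cases:
  assumes "prime n \<or> (\<exists>p::nat. prime p \<and> n = p ^ 2) \<or> (\<exists>k::nat. n = 2 ^ k)" and "n \<ge> 2"
  obtains p E where "prime p" "E > 0" "n = p ^ E"
proof -
  consider "prime n" | p :: nat where "prime p" "n = p ^ 2" | k :: nat where "n = 2 ^ k"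
    using assms(1) by blast
  thus thesis
  proof cases
    case 1
    thus thesis using that[of n 1] by simp
  next
    case (2 p)
    thus thesis using that[of p 2] by simp
  next
    case (3 k)
    hence "k > 0" using assms(2) by (cases k) auto
    thus thesis using that[of 2 k] 3 by simp
  qed
qed

theorem theorem8:
  fixes n :: nat and a :: "nat \<Rightarrow> complex"
  assumes herm: "hermitian_mat (circ n a)"
    and upst: "universal_pst (circ n a)"
    and n_form: "prime n \<or> (\<exists>p::nat. prime p \<and> n = p ^ 2) \<or> (\<exists>k::nat. n = 2 ^ k)"
  shows "dense_circ n a"
proof (cases "n \<ge> 2")
  case n: True
  obtain p E where p: "prime p" and E: "E > 0" and n_eq: "n = p ^ E"
    using prime_power_cases[OF n_form n] .
  let ?ev = "circ_eigenvalue n a"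
  have circ: "circ n a = circ_spectral n ?ev" using n by (simp add: circ_eq_circ_spectral)
  obtain t where "t > 0" "cmod (transfer_amp (circ n a) t 1 0) = 1"
    using upst[unfolded universal_pst_def, rule_format, of 0 1] n by (auto simp: circ)
  moreover have "?ev k \<in> \<real>" if "k < n" for k
    using hermitian_circ_spectral_imp_real[OF _ herm[unfolded circ] that] n by simp
  ultimately obtain c m where c: "c \<noteq> 0"
    and spec: "\<And>k. k < n \<Longrightarrow> ?ev k = ?ev 0 + of_real c * (of_nat k - of_nat n * of_int (m k))"
    using circ_spectral_pst_eigenvalues[OF n] unfolding circ by metis
  show ?thesis unfolding dense_circ_def
  proof (intro ballI notI)
    fix j assume "j \<in> {1..n - 1}" and a: "a j = 0"
    hence "0 < j" "j < n" by auto
    then obtain Q :: "int poly" where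
      "(unity_root n (- int j) - 1) * poly (map_poly of_int Q) (unity_root n (- int j)) = 1"
      using circ_zero_entry_imp_unit[OF _ _ _ a _ spec] n c by auto
    moreover have "unity_root n (- int j) ^ n = 1"
      using n by (simp add: unity_root_power unity_root_eq_1_iff)
    ultimately show False using root_of_unity_minus_one_not_unit[OF p E, folded n_eq] by blast
  qed
qed (auto simp: dense_circ_def)

end
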